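(* Consider a one-red TAP instance with $n$ blue features, and let $\mathrm{OPT}_{SC}$ be the smallest number of red features appearing in a set of exemplars in which all blue features appear. Let $K=\lceil \tfrac12(n-\mathrm{OPT}_{SC})\rceil$. Then GREEDY covers at least $2K$ blue features in its first $K$ moves (iterations).
   Context: Target Approximation Problem (TAP): the input is a groundset $U$ of features, a target $T\subseteq U$, and a collection $S$ of exemplars, each a subset of $U$. Features in $U\cap T$ are blue, features in $U\setminus T$ are red. A feature appears in $S'\subseteq S$ if it lies in $\bigcup_{E\in S'}E$. It is assumed that every feature appears in at least one exemplar and that $T$ and all exemplars are nonempty. An instance is one-red if every exemplar contains exactly one red feature. A red feature $r$ covers a blue feature $b$ if some exemplar contains both. GREEDY: until every blue feature is covered, repeatedly choose the red feature that covers the largest number of not-yet-covered blue features (ties broken arbitrarily); each such choice is one move, and the blue features covered by that move are the previously uncovered blue features covered by the chosen red feature. *)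

theory Defs
  imports Complex_Main
begin

definition tap_instance :: "'a set \<Rightarrow> 'a set \<Rightarrow> 'a set set \<Rightarrow> bool" where
  "tap_instance U T S \<longleftrightarrow> finite U \<and> T \<subseteq> U \<and> T \<noteq> {} \<and>
     (\<forall>E\<in>S. E \<subseteq> U \<and> E \<noteq> {}) \<and> \<Union>S = U"

text \<open>Every exemplar contains exactly one red feature.\<close>
definition one_red :: "'a set \<Rightarrow> 'a set \<Rightarrow> 'a set set \<Rightarrow> bool" where
  "one_red U T S \<longleftrightarrow> (\<forall>E\<in>S. card (E - T) = 1)"

definition opt_sc :: "'a set \<Rightarrow> 'a set \<Rightarrow> 'a set set \<Rightarrow> nat" where
  "opt_sc U T S = Min {card (\<Union>S' - T) | S'. S' \<subseteq> S \<and> T \<subseteq> \<Union>S'}"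

definition covers :: "'a set \<Rightarrow> 'a set set \<Rightarrow> 'a \<Rightarrow> 'a set" where
  "covers T S r = {b \<in> T. \<exists>E\<in>S. r \<in> E \<and> b \<in> E}"

definition covered :: "'a set \<Rightarrow> 'a set set \<Rightarrow> 'a list \<Rightarrow> 'a set" where
  "covered T S rs = (\<Union>r\<in>set rs. covers T S r)"

definition greedy_run :: "'a set \<Rightarrow> 'a set \<Rightarrow> 'a set set \<Rightarrow> 'a list \<Rightarrow> bool" where
  "greedy_run U T S rs \<longleftrightarrow>
     (\<forall>i<length rs.
        rs ! i \<in> U - T \<and>
        \<not> T \<subseteq> covered T S (take i rs) \<and>
        (\<forall>r\<in>U - T. card (covers T S r - covered T S (take i rs))
                    \<le> card (covers T S (rs ! i) - covered T S (take i rs))))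
     \<and> T \<subseteq> covered T S rs"

end

theory Submission
  imports Defs
begin

text \<open>As long as GREEDY can cover two new blue features per move, it does so. Once every
  red feature covers at most one uncovered blue feature, each red feature of an optimal
  set-cover solution covers at most one of the uncovered blue features, so at most OPT of
  them remain: at least n - OPT \<ge> 2K - 1 are already covered, and the current move still
  covers one more. Hence after i moves at least min (2i) (n - OPT + 1) blue features are
  covered.\<close>

lemma covers_subset: "covers T S r \<subseteq> T"
  unfolding covers_def by auto

lemma covered_subset: "covered T S rs \<subseteq> T"
  unfolding covered_def covers_def by blast

lemma card_covered_take_Suc:
  assumes "finite T" "i < length rs"
  shows "card (covered T S (take (Suc i) rs))
       = card (covered T S (take i rs)) + card (covers T S (rs ! i) - covered T S (take i rs))"
proof -
  let ?C = "covered T S (take i rs)" and ?N = "covers T S (rs ! i)"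
  have fin: "finite ?C" "finite ?N"
    using finite_subset[OF covered_subset assms(1)] finite_subset[OF covers_subset assms(1)] .
  have "covered T S (take (Suc i) rs) = ?C \<union> (?N - ?C)"
    using assms(2) by (auto simp: covered_def take_Suc_conv_app_nth)
  also have "card \<dots> = card ?C + card (?N - ?C)"
    using fin by (intro card_Un_disjoint) auto
  finally show ?thesis .
qed

lemma tap_instance_finite_target: "tap_instance U T S \<Longrightarrow> finite T"
  unfolding tap_instance_def using finite_subset by blast

lemma covers_by_red_of_exemplars:
  assumes "one_red U T S" "S' \<subseteq> S" "b \<in> T" "b \<in> \<Union>S'"
  obtains r where "r \<in> \<Union>S' - T" "b \<in> covers T S r"
proof -
  obtain E where E: "E \<in> S'" "b \<in> E"
    using assms(4) by blast
  have "card (E - T) = 1"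
    using assms(1,2) E(1) unfolding one_red_def by blast
  then obtain r where "E - T = {r}"
    by (rule card_1_singletonE)
  with E assms(2,3) show ?thesis
    using that unfolding covers_def by blast
qed

lemma opt_sc_attained:
  assumes "tap_instance U T S"
  obtains S' where "S' \<subseteq> S" "T \<subseteq> \<Union>S'" "opt_sc U T S = card (\<Union>S' - T)"
proof -
  let ?M = "{card (\<Union>S' - T) | S'. S' \<subseteq> S \<and> T \<subseteq> \<Union>S'}"
  have U: "finite U" "\<Union>S = U" "T \<subseteq> U"
    using assms unfolding tap_instance_def by auto
  have "?M \<subseteq> {..card U}"
    using U by (auto intro!: card_mono)
  then have "finite ?M"
    using finite_subset by blast
  moreover have "?M \<noteq> {}"
    using U by auto
  ultimately have "opt_sc U T S \<in> ?M"
    unfolding opt_sc_def using Min_in by blast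
  then show ?thesis
    using that by blast
qed

lemma card_uncovered_le_opt_sc_mult:
  assumes inst: "tap_instance U T S" and red: "one_red U T S"
    and gain: "\<forall>r\<in>U - T. card (covers T S r - C) \<le> g"
  shows "card (T - C) \<le> opt_sc U T S * g"
proof -
  obtain S' where S': "S' \<subseteq> S" "T \<subseteq> \<Union>S'" "opt_sc U T S = card (\<Union>S' - T)"
    using opt_sc_attained[OF inst] by blast
  let ?R = "\<Union>S' - T"
  have U: "finite U" "\<Union>S = U"
    using inst unfolding tap_instance_def by auto
  have "?R \<subseteq> U"
    using S'(1) U(2) by blast
  then have fin_R: "finite ?R"
    using U(1) finite_subset by blast
  have fin_UN: "finite (\<Union>r\<in>?R. covers T S r - C)"
    using fin_R finite_subset[OF covers_subset tap_instance_finite_target[OF inst]] by simp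
  have "T - C \<subseteq> (\<Union>r\<in>?R. covers T S r - C)"
  proof
    fix b assume "b \<in> T - C"
    then obtain r where "r \<in> ?R" "b \<in> covers T S r"
      using covers_by_red_of_exemplars[OF red S'(1)] S'(2) by blast
    with \<open>b \<in> T - C\<close> show "b \<in> (\<Union>r\<in>?R. covers T S r - C)"
      by blast
  qed
  then have "card (T - C) \<le> card (\<Union>r\<in>?R. covers T S r - C)"
    by (rule card_mono[OF fin_UN])
  also have "\<dots> \<le> (\<Sum>r\<in>?R. card (covers T S r - C))"
    using card_UN_le[OF fin_R] .
  also have "\<dots> \<le> (\<Sum>r\<in>?R. g)"
    using gain S'(1) U(2) by (intro sum_mono) blast
  also have "\<dots> = opt_sc U T S * g"
    using S'(3) by simp
  finally show ?thesis .
qed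

lemma card_target_diff_opt_sc_less:
  assumes "tap_instance U T S" "one_red U T S"
  shows "card T - opt_sc U T S < card T"
proof -
  have fin: "finite T" and "T \<noteq> {}"
    using assms(1) tap_instance_finite_target unfolding tap_instance_def by blast+
  have "\<forall>r\<in>U - T. card (covers T S r - {}) \<le> card T"
    using card_mono[OF fin covers_subset] by simp
  then have "card T \<le> opt_sc U T S * card T"
    using card_uncovered_le_opt_sc_mult[OF assms, where C = "{}" and g = "card T"] by simp
  moreover have "0 < card T"
    using fin \<open>T \<noteq> {}\<close> by (simp add: card_gt_0_iff)
  ultimately show ?thesis
    by (cases "opt_sc U T S") auto
qed

lemma greedy_run_move:
  assumes "greedy_run U T S rs" "i < length rs"
  shows greedy_run_uncovered: "\<not> T \<subseteq> covered T S (take i rs)"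
    and greedy_run_maximal: "r \<in> U - T \<Longrightarrow> card (covers T S r - covered T S (take i rs))
      \<le> card (covers T S (rs ! i) - covered T S (take i rs))"
  using assms unfolding greedy_run_def by blast+

lemma greedy_run_covered: "greedy_run U T S rs \<Longrightarrow> covered T S rs = T"
  unfolding greedy_run_def using covered_subset[of T S rs] by blast

lemma greedy_gain_pos:
  assumes inst: "tap_instance U T S" and red: "one_red U T S"
    and run: "greedy_run U T S rs" and i: "i < length rs"
  shows "1 \<le> card (covers T S (rs ! i) - covered T S (take i rs))"
proof -
  let ?C = "covered T S (take i rs)"
  obtain b where b: "b \<in> T" "b \<notin> ?C"
    using greedy_run_uncovered[OF run i] by blast
  have U: "\<Union>S = U" "T \<subseteq> U"
    using inst unfolding tap_instance_def by blast+
  then obtain r where r: "r \<in> U - T" "b \<in> covers T S r"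
    using covers_by_red_of_exemplars[OF red order_refl b(1)] b(1) by blast
  have "finite (covers T S r - ?C)"
    using finite_subset[OF covers_subset tap_instance_finite_target[OF inst]] by simp
  then have "0 < card (covers T S r - ?C)"
    using r(2) b(2) card_gt_0_iff by blast
  then have "1 \<le> card (covers T S r - ?C)"
    by simp
  also have "\<dots> \<le> card (covers T S (rs ! i) - ?C)"
    by (rule greedy_run_maximal[OF run i r(1)])
  finally show ?thesis .
qed

lemma greedy_small_gain_covered:
  assumes inst: "tap_instance U T S" and red: "one_red U T S"
    and run: "greedy_run U T S rs" and i: "i < length rs"
    and small: "card (covers T S (rs ! i) - covered T S (take i rs)) \<le> 1"
  shows "card T - opt_sc U T S \<le> card (covered T S (take i rs))"
proof -
  let ?C = "covered T S (take i rs)"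
  have "\<forall>r\<in>U - T. card (covers T S r - ?C) \<le> 1"
    using greedy_run_maximal[OF run i] small le_trans by blast
  then have "card (T - ?C) \<le> opt_sc U T S"
    using card_uncovered_le_opt_sc_mult[OF inst red] by (metis mult.right_neutral)
  moreover have "card (T - ?C) = card T - card ?C"
    using card_Diff_subset[OF finite_subset[OF covered_subset] covered_subset]
      tap_instance_finite_target[OF inst] by blast
  ultimately show ?thesis
    by linarith
qed

lemma greedy_run_progress:
  assumes inst: "tap_instance U T S" and red: "one_red U T S" and run: "greedy_run U T S rs"
  shows "min (2 * i) (card T - opt_sc U T S + 1) \<le> card (covered T S (take i rs))"
proof (induction i)
  case 0
  show ?case by simp
next
  case (Suc i)
  show ?case
  proof (cases "i < length rs")
    case False
    then have "take (Suc i) rs = rs"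
      by simp
    then have "covered T S (take (Suc i) rs) = T"
      using greedy_run_covered[OF run] by simp
    then show ?thesis
      using card_target_diff_opt_sc_less[OF inst red] by simp
  next
    case True
    let ?C = "covered T S (take i rs)"
    let ?g = "card (covers T S (rs ! i) - ?C)"
    have step: "card (covered T S (take (Suc i) rs)) = card ?C + ?g"
      using card_covered_take_Suc[OF tap_instance_finite_target[OF inst] True] .
    show ?thesis
    proof (cases "?g \<le> 1")
      case True
      then have "card T - opt_sc U T S \<le> card ?C"
        by (rule greedy_small_gain_covered[OF inst red run \<open>i < length rs\<close>])
      moreover have "1 \<le> ?g"
        using greedy_gain_pos[OF inst red run \<open>i < length rs\<close>] .
      ultimately show ?thesis
        using step by (simp add: min_le_iff_disj)
    next
      case False
      then show ?thesis
        using step Suc.IH by (auto simp: min_le_iff_disj)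
    qed
  qed
qed

lemma two_mult_nat_ceiling_half_diff_le:
  fixes n d :: nat
  shows "2 * nat \<lceil>(real n - real d) / 2\<rceil> \<le> n - d + 1"
proof -
  define c where "c = \<lceil>(real n - real d) / 2\<rceil>"
  have "real_of_int c < (real n - real d) / 2 + 1"
    unfolding c_def by linarith
  then have "real_of_int (2 * c) < real_of_int (int n - int d + 2)"
    by (simp add: field_simps)
  then have "2 * c < int n - int d + 2"
    by (simp only: of_int_less_iff)
  then show ?thesis
    unfolding c_def[symmetric] by (cases "c \<le> 0") auto
qed

theorem lemma14:
  fixes U T :: "'a set" and S :: "'a set set" and rs :: "'a list" and n K :: nat
  assumes "tap_instance U T S"
    and "one_red U T S"
    and "n = card T"
    and "K = nat \<lceil>(real n - real (opt_sc U T S)) / 2\<rceil>"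
    and "greedy_run U T S rs"
  shows "2 * K \<le> card (covered T S (take K rs))"
proof -
  have "2 * K \<le> n - opt_sc U T S + 1"
    using assms(4) two_mult_nat_ceiling_half_diff_le by simp
  moreover have "min (2 * K) (n - opt_sc U T S + 1) \<le> card (covered T S (take K rs))"
    using greedy_run_progress[OF assms(1,2,5)] assms(3) by simp
  ultimately show ?thesis
    by simp
qed

end
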